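(* The class $\mathcal{D}^-$ has the following properties. (a) If $X_n\in\mathcal{D}^-$ for all $n\in\mathbb{N}$ and $X_n$ converges in distribution to $X$, then $X\in\mathcal{D}^-$. (b) If $X\in\mathcal{D}^-$ is non-degenerate (not almost surely constant), then $E|X|=\infty$. (c) If $X\in\mathcal{D}^-$, then $aX+b\in\mathcal{D}^-$ for all $a>0$ and $b\in\mathbb{R}$. (d) If $X,Y\in\mathcal{D}^-$ are independent, then $X+Y\in\mathcal{D}^-$. (e) If $X,Y\in\mathcal{D}^-$ are independent, then $\max\{X,Y\}\in\mathcal{D}^-$. (f) If $X\in\mathcal{D}^-$ and $\phi:\mathbb{R}\to\mathbb{R}$ is non-decreasing and convex, then $\phi(X)\in\mathcal{D}^-$.
   Context: For real random variables, $X \le_{st} Y$ means $P(X\le t)\ge P(Y\le t)$ for all $t\in\mathbb{R}$. A real random variable $X$ (equivalently its distribution function $F_X$) belongs to $\mathcal{D}^-$ if for every $n\in\mathbb{N}$, all $\theta_1,\dots,\theta_n\ge 0$ with $\sum_{i=1}^n\theta_i=1$, and i.i.d. random variables $X_1,\dots,X_n$ with distribution $F_X$, we have $X_1\le_{st}\sum_{i=1}^n\theta_iX_i$. *)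

theory Defs
  imports "HOL-Probability.Probability"
begin

text \<open>For i.i.d. X_1,...,X_n with law mu, the law of sum theta_i X_i is the image of the
  product measure mu^n under the map x |-> sum theta_i x_i.
  X_1 <=_st S means P(X_1 <= t) >= P(S <= t) for all t.\<close>

definition D_minus :: "real measure \<Rightarrow> bool" where
  "D_minus \<mu> \<longleftrightarrow> real_distribution \<mu> \<and>
     (\<forall>(n::nat) (\<theta>::nat \<Rightarrow> real).
        (\<forall>i<n. 0 \<le> \<theta> i) \<and> (\<Sum>i<n. \<theta> i) = 1 \<longrightarrow>
        (\<forall>t::real.
           measure (distr (PiM {..<n} (\<lambda>_. \<mu>)) borel (\<lambda>x. \<Sum>i<n. \<theta> i * x i)) {..t}
           \<le> measure \<mu> {..t}))"

definition D_minus_rv :: "'a measure \<Rightarrow> ('a \<Rightarrow> real) \<Rightarrow> bool" where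
  "D_minus_rv M X \<longleftrightarrow> D_minus (distr M borel X)"

end

theory Submission
  imports Defs
begin

text \<open>
  Stochastic dominance \<open>X \<le>\<^sub>s\<^sub>t Z\<close> makes every down-set less likely for \<open>Z\<close> than for \<open>X\<close>.
  For (f), and hence (c), Jensen gives \<open>\<Sum>\<theta>\<^sub>i \<phi>(X\<^sub>i) \<ge> \<phi>(\<Sum>\<theta>\<^sub>i X\<^sub>i)\<close>, and \<open>{\<phi> \<le> t}\<close> is a
  down-set.  (d) and (e) are the two-variable version for \<open>x + y\<close> and \<open>max x y\<close>, which are convex
  and nondecreasing in each argument: the weighted sums of \<open>X\<^sub>i\<close> and of \<open>Y\<^sub>i\<close> are independent and
  dominate \<open>X\<close> and \<open>Y\<close>, and by Fubini this makes every down-set of \<open>\<real>\<^sup>2\<close> less likely.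
  (a) follows from Skorohod's representation: a strict inequality at the limit passes to the
  approximants, and right-continuity of distribution functions closes the gap.
  For (b), if \<open>X\<close> has a finite mean \<open>m\<close>, comparing \<open>E(X - m)\<^sup>+ = E|X - m|/2\<close> with the same
  quantity for \<open>(X\<^sub>1 + X\<^sub>2)/2\<close> gives \<open>E|X\<^sub>1 - m| + E|X\<^sub>2 - m| \<le> E|X\<^sub>1 + X\<^sub>2 - 2m|\<close>, so
  \<open>X\<^sub>1 - m\<close> and \<open>X\<^sub>2 - m\<close> almost surely have the same sign; by independence \<open>X - m\<close> has a
  constant sign, hence vanishes, its mean being zero.
\<close>

definition weighted_sum_law :: "real measure \<Rightarrow> nat \<Rightarrow> (nat \<Rightarrow> real) \<Rightarrow> real measure" where
  "weighted_sum_law \<mu> n \<theta> = distr (PiM {..<n} (\<lambda>_. \<mu>)) borel (\<lambda>x. \<Sum>i<n. \<theta> i * x i)"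

definition prob_weights :: "nat \<Rightarrow> (nat \<Rightarrow> real) \<Rightarrow> bool" where
  "prob_weights n \<theta> \<longleftrightarrow> (\<forall>i<n. 0 \<le> \<theta> i) \<and> (\<Sum>i<n. \<theta> i) = 1"

definition stoch_le :: "real measure \<Rightarrow> real measure \<Rightarrow> bool" where
  "stoch_le \<alpha> \<beta> \<longleftrightarrow> (\<forall>t. cdf \<beta> t \<le> cdf \<alpha> t)"

lemma D_minus_iff:
  "D_minus \<mu> \<longleftrightarrow> real_distribution \<mu> \<and>
     (\<forall>n \<theta>. prob_weights n \<theta> \<longrightarrow> stoch_le \<mu> (weighted_sum_law \<mu> n \<theta>))"
  unfolding D_minus_def stoch_le_def prob_weights_def weighted_sum_law_def cdf_def by simp

lemma D_minusD:
  "D_minus \<mu> \<Longrightarrow> prob_weights n \<theta> \<Longrightarrow> cdf (weighted_sum_law \<mu> n \<theta>) t \<le> cdf \<mu> t"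
  by (simp add: D_minus_iff stoch_le_def)

lemma D_minusI:
  assumes "real_distribution \<mu>"
    and "\<And>n \<theta> t. prob_weights n \<theta> \<Longrightarrow> cdf (weighted_sum_law \<mu> n \<theta>) t \<le> cdf \<mu> t"
  shows "D_minus \<mu>"
  using assms by (simp add: D_minus_iff stoch_le_def)

lemma D_minus_real_distribution: "D_minus \<mu> \<Longrightarrow> real_distribution \<mu>"
  by (simp add: D_minus_iff)

lemma prob_weights_nonempty: "prob_weights n \<theta> \<Longrightarrow> n \<noteq> 0"
  by (cases n) (auto simp: prob_weights_def)

lemma real_distribution_weighted_sum_law:
  assumes "real_distribution \<mu>"
  shows "real_distribution (weighted_sum_law \<mu> n \<theta>)"
proof -
  interpret real_distribution \<mu> by fact
  have "sets (PiM {..<n} (\<lambda>_. \<mu>)) = sets (PiM {..<n} (\<lambda>_. borel))"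
    by (intro sets_PiM_cong) auto
  then have meas: "(\<lambda>x. \<Sum>i<n. \<theta> i * x i) \<in> borel_measurable (PiM {..<n} (\<lambda>_. \<mu>))"
    by (simp cong: measurable_cong_sets)
  interpret P: prob_space "PiM {..<n} (\<lambda>_. \<mu>)"
    by (intro prob_space_PiM) (simp add: prob_space_axioms)
  from P.real_distribution_distr[OF meas] show ?thesis
    unfolding weighted_sum_law_def .
qed

lemma indep_vars_PiM_components:
  assumes "finite I" "I \<noteq> {}" "\<And>i. i \<in> I \<Longrightarrow> prob_space (M i)"
  shows "prob_space.indep_vars (PiM I M) M (\<lambda>i x. x i) I"
proof -
  interpret P: prob_space "PiM I M" using assms by (intro prob_space_PiM) auto
  have "distr (PiM I M) (PiM I M) (\<lambda>x. \<lambda>i\<in>I. x i) = distr (PiM I M) (PiM I M) (\<lambda>x. x)"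
    by (intro distr_cong) (auto simp: space_PiM PiE_def extensional_def fun_eq_iff)
  also have "\<dots> = PiM I (\<lambda>i. distr (PiM I M) (M i) (\<lambda>x. x i))"
    by (simp, intro PiM_cong refl distr_PiM_component[symmetric]) (auto simp: assms)
  finally show ?thesis
    by (subst P.indep_vars_iff_distr_eq_PiM'[OF \<open>I \<noteq> {}\<close>]) auto
qed

lemma distr_weighted_sum_iid:
  assumes "prob_space \<Omega>" "n \<noteq> 0"
    and indep: "prob_space.indep_vars \<Omega> (\<lambda>_. borel) Z {..<n}"
    and meas: "\<And>i. i < n \<Longrightarrow> Z i \<in> borel_measurable \<Omega>"
    and law: "\<And>i. i < n \<Longrightarrow> distr \<Omega> borel (Z i) = \<rho>"
  shows "distr \<Omega> borel (\<lambda>\<omega>. \<Sum>i<n. \<theta> i * Z i \<omega>) = weighted_sum_law \<rho> n \<theta>"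
proof -
  interpret prob_space \<Omega> by fact
  let ?Z = "\<lambda>\<omega>. \<lambda>i\<in>{..<n}. Z i \<omega>"
  have Z: "?Z \<in> measurable \<Omega> (PiM {..<n} (\<lambda>_. borel))"
    by (intro measurable_restrict) (auto simp: meas)
  have "distr \<Omega> (PiM {..<n} (\<lambda>_. borel)) ?Z = PiM {..<n} (\<lambda>i. distr \<Omega> borel (Z i))"
    using indep \<open>n \<noteq> 0\<close> by (subst (asm) indep_vars_iff_distr_eq_PiM') (auto simp: meas)
  also have "\<dots> = PiM {..<n} (\<lambda>_. \<rho>)"
    by (intro PiM_cong) (auto simp: law)
  finally have joint: "distr \<Omega> (PiM {..<n} (\<lambda>_. borel)) ?Z = PiM {..<n} (\<lambda>_. \<rho>)" .
  have "distr \<Omega> borel (\<lambda>\<omega>. \<Sum>i<n. \<theta> i * Z i \<omega>) =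
      distr (distr \<Omega> (PiM {..<n} (\<lambda>_. borel)) ?Z) borel (\<lambda>x. \<Sum>i<n. \<theta> i * x i)"
    by (subst distr_distr[OF _ Z]) (auto simp: comp_def)
  also have "\<dots> = weighted_sum_law \<rho> n \<theta>"
    unfolding joint weighted_sum_law_def by (intro distr_cong) (auto simp: sets_PiM_cong)
  finally show ?thesis .
qed

lemma weighted_sum_law_distr:
  assumes "prob_space \<mu>" "n \<noteq> 0" and g: "g \<in> borel_measurable \<mu>"
  shows "weighted_sum_law (distr \<mu> borel g) n \<theta> =
    distr (PiM {..<n} (\<lambda>_. \<mu>)) borel (\<lambda>x. \<Sum>i<n. \<theta> i * g (x i))"
proof -
  let ?P = "PiM {..<n} (\<lambda>_. \<mu>)"
  interpret P: prob_space ?P by (intro prob_space_PiM) (simp add: assms)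
  have "P.indep_vars (\<lambda>_. \<mu>) (\<lambda>i x. x i) {..<n}"
    by (rule indep_vars_PiM_components) (use assms in auto)
  then have indep: "P.indep_vars (\<lambda>_. borel) (\<lambda>i x. g (x i)) {..<n}"
    by (rule P.indep_vars_compose2) (simp add: g)
  have law: "distr ?P borel (\<lambda>x. g (x i)) = distr \<mu> borel g" if "i < n" for i
  proof -
    have "distr ?P borel (\<lambda>x. g (x i)) = distr (distr ?P \<mu> (\<lambda>x. x i)) borel g"
      using that by (subst distr_distr[OF g]) (simp_all add: comp_def)
    also have "distr ?P \<mu> (\<lambda>x. x i) = \<mu>"
      by (rule distr_PiM_component) (use assms that in auto)
    finally show ?thesis .
  qed
  show ?thesis
    by (rule distr_weighted_sum_iid[OF P.prob_space_axioms \<open>n \<noteq> 0\<close> indep, symmetric])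
       (use g law in auto)
qed

lemma downward_closed_real_cases:
  fixes D :: "real set"
  assumes down: "\<And>x y. y \<le> x \<Longrightarrow> x \<in> D \<Longrightarrow> y \<in> D"
  obtains "D = {}" | "D = UNIV" | s where "D = {..s}" | s where "D = {..<s}"
proof (cases "D = {} \<or> \<not> bdd_above D")
  case True
  moreover have "D = UNIV" if "\<not> bdd_above D"
    using that down by (auto simp: bdd_above_def) (meson le_cases)
  ultimately show ?thesis using that(1,2) by auto
next
  case False
  then have ne: "D \<noteq> {}" and bdd: "bdd_above D" by auto
  have le_Sup: "x \<le> Sup D" if "x \<in> D" for x
    using that bdd by (rule cSup_upper)
  show ?thesis
  proof (cases "Sup D \<in> D")
    case True
    then have "D = {..Sup D}" using le_Sup down by auto
    then show ?thesis using that by blast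
  next
    case False
    have "D = {..<Sup D}"
    proof safe
      fix x assume "x \<in> D"
      then show "x < Sup D" using False le_Sup[of x] by (cases "x = Sup D") auto
    next
      fix x assume "x < Sup D"
      then obtain y where "y \<in> D" "x < y" using less_cSup_iff[OF ne bdd] by auto
      then show "x \<in> D" using down[of x y] by simp
    qed
    then show ?thesis using that by blast
  qed
qed

lemma stoch_le_measure_downset:
  assumes "real_distribution \<alpha>" "real_distribution \<beta>" and le: "stoch_le \<alpha> \<beta>"
    and down: "\<And>x y. y \<le> x \<Longrightarrow> x \<in> D \<Longrightarrow> y \<in> D"
  shows "measure \<beta> D \<le> measure \<alpha> D"
proof -
  interpret \<alpha>: real_distribution \<alpha> by fact
  interpret \<beta>: real_distribution \<beta> by fact
  have cdf_le: "cdf \<beta> t \<le> cdf \<alpha> t" for t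
    using le by (simp add: stoch_le_def)
  show ?thesis
  proof (rule downward_closed_real_cases[OF down])
    show ?thesis if "D = {}"
      using that by simp
    show ?thesis if "D = UNIV"
      using that \<alpha>.prob_space \<beta>.prob_space by simp
    show ?thesis if "D = {..s}" for s
      using that cdf_le by (simp add: cdf_def)
    show ?thesis if "D = {..<s}" for s
    proof -
      have "measure \<beta> {..<s} \<le> measure \<alpha> {..<s}"
        using \<alpha>.cdf_at_left \<beta>.cdf_at_left by (rule tendsto_le[OF trivial_limit_at_left_real])
           (simp add: cdf_le)
      then show ?thesis using that by simp
    qed
  qed
qed

lemma stoch_le_measure_pair_downset:
  assumes \<alpha>: "real_distribution \<alpha>" and \<beta>: "real_distribution \<beta>"
    and \<mu>: "real_distribution \<mu>" and \<nu>: "real_distribution \<nu>"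
    and le1: "stoch_le \<mu> \<alpha>" and le2: "stoch_le \<nu> \<beta>"
    and D: "D \<in> sets (borel \<Otimes>\<^sub>M borel)"
    and down: "\<And>x y x' y'. x \<le> x' \<Longrightarrow> y \<le> y' \<Longrightarrow> (x', y') \<in> D \<Longrightarrow> (x, y) \<in> D"
  shows "measure (\<alpha> \<Otimes>\<^sub>M \<beta>) D \<le> measure (\<mu> \<Otimes>\<^sub>M \<nu>) D"
proof -
  interpret \<alpha>: real_distribution \<alpha> by fact
  interpret \<beta>: real_distribution \<beta> by fact
  interpret \<mu>: real_distribution \<mu> by fact
  interpret \<nu>: real_distribution \<nu> by fact
  interpret \<alpha>\<nu>: pair_sigma_finite \<alpha> \<nu> by unfold_locales
  have sets_D: "D \<in> sets (M \<Otimes>\<^sub>M N)" if "real_distribution M" "real_distribution N" for M N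
    using D that by (subst sets_pair_measure_cong) (auto simp: real_distribution.events_eq_borel)
  have section_le: "emeasure M' (Pair x -` D) \<le> emeasure M (Pair x -` D)"
    "emeasure M' ((\<lambda>y. (y, x)) -` D) \<le> emeasure M ((\<lambda>y. (y, x)) -` D)"
    if "real_distribution M" "real_distribution M'" "stoch_le M M'" for M M' x
  proof -
    interpret M: real_distribution M by fact
    interpret M': real_distribution M' by fact
    have "measure M' (Pair x -` D) \<le> measure M (Pair x -` D)"
      by (rule stoch_le_measure_downset[OF that]) (use down[of x x] in auto)
    moreover have "measure M' ((\<lambda>y. (y, x)) -` D) \<le> measure M ((\<lambda>y. (y, x)) -` D)"
      by (rule stoch_le_measure_downset[OF that]) (use down[of _ _ x x] in auto)
    ultimately show "emeasure M' (Pair x -` D) \<le> emeasure M (Pair x -` D)"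
      "emeasure M' ((\<lambda>y. (y, x)) -` D) \<le> emeasure M ((\<lambda>y. (y, x)) -` D)"
      by (simp_all add: M.emeasure_eq_measure M'.emeasure_eq_measure)
  qed
  have "emeasure (\<alpha> \<Otimes>\<^sub>M \<beta>) D = (\<integral>\<^sup>+x. emeasure \<beta> (Pair x -` D) \<partial>\<alpha>)"
    by (rule \<beta>.emeasure_pair_measure_alt[OF sets_D[OF \<alpha> \<beta>]])
  also have "\<dots> \<le> (\<integral>\<^sup>+x. emeasure \<nu> (Pair x -` D) \<partial>\<alpha>)"
    by (intro nn_integral_mono section_le \<beta> \<nu> le2)
  also have "\<dots> = emeasure (\<alpha> \<Otimes>\<^sub>M \<nu>) D"
    by (rule \<nu>.emeasure_pair_measure_alt[OF sets_D[OF \<alpha> \<nu>], symmetric])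
  also have "\<dots> = (\<integral>\<^sup>+y. emeasure \<alpha> ((\<lambda>x. (x, y)) -` D) \<partial>\<nu>)"
    by (rule \<alpha>\<nu>.emeasure_pair_measure_alt2[OF sets_D[OF \<alpha> \<nu>]])
  also have "\<dots> \<le> (\<integral>\<^sup>+y. emeasure \<mu> ((\<lambda>x. (x, y)) -` D) \<partial>\<nu>)"
    by (intro nn_integral_mono section_le \<alpha> \<mu> le1)
  also have "\<dots> = emeasure (\<mu> \<Otimes>\<^sub>M \<nu>) D"
    by (rule pair_sigma_finite.emeasure_pair_measure_alt2[OF _ sets_D[OF \<mu> \<nu>], symmetric])
       unfold_locales
  finally have "emeasure (\<alpha> \<Otimes>\<^sub>M \<beta>) D \<le> emeasure (\<mu> \<Otimes>\<^sub>M \<nu>) D" .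
  interpret \<alpha>\<beta>: prob_space "\<alpha> \<Otimes>\<^sub>M \<beta>"
    by (intro prob_space_pair \<alpha>.prob_space_axioms \<beta>.prob_space_axioms)
  interpret \<mu>\<nu>: prob_space "\<mu> \<Otimes>\<^sub>M \<nu>"
    by (intro prob_space_pair \<mu>.prob_space_axioms \<nu>.prob_space_axioms)
  from \<open>emeasure (\<alpha> \<Otimes>\<^sub>M \<beta>) D \<le> emeasure (\<mu> \<Otimes>\<^sub>M \<nu>) D\<close> show ?thesis
    by (simp add: \<alpha>\<beta>.emeasure_eq_measure \<mu>\<nu>.emeasure_eq_measure)
qed

lemma cdf_distr:
  "f \<in> borel_measurable M \<Longrightarrow> cdf (distr M borel f) t = measure M {x \<in> space M. f x \<le> t}"
  by (simp add: cdf_def measure_distr vimage_def Int_def conj_commute)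

lemma sets_pair_borel_le:
  fixes f :: "real \<times> real \<Rightarrow> real"
  shows "f \<in> borel_measurable (borel \<Otimes>\<^sub>M borel) \<Longrightarrow> {p. f p \<le> t} \<in> sets (borel \<Otimes>\<^sub>M borel)"
  using measurable_sets[of f "borel \<Otimes>\<^sub>M borel" borel "{..t}"] by (simp add: space_pair_measure vimage_def atMost_borel)

lemma convex_on_UNIV_borel_measurable:
  fixes f :: "'a::euclidean_space \<Rightarrow> real"
  shows "convex_on UNIV f \<Longrightarrow> f \<in> borel_measurable borel"
  using convex_on_continuous[of UNIV f] by (simp add: borel_measurable_continuous_onI)

lemma convex_on_weighted_sum:
  fixes f :: "'a::real_vector \<Rightarrow> real"
  assumes "prob_weights n \<theta>" "convex_on UNIV f"
  shows "f (\<Sum>i<n. \<theta> i *\<^sub>R x i) \<le> (\<Sum>i<n. \<theta> i * f (x i))"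
  using assms prob_weights_nonempty[OF assms(1)]
  by (intro convex_on_sum) (auto simp: prob_weights_def)

lemma D_minus_distr_convex_mono:
  assumes D: "D_minus \<mu>" and mono: "mono \<phi>" and cvx: "convex_on UNIV \<phi>"
  shows "D_minus (distr \<mu> borel \<phi>)"
proof -
  interpret real_distribution \<mu>
    using D by (rule D_minus_real_distribution)
  have [measurable]: "\<phi> \<in> borel_measurable borel"
    using cvx by (rule convex_on_UNIV_borel_measurable)
  show ?thesis
  proof (rule D_minusI)
    show "real_distribution (distr \<mu> borel \<phi>)"
      by (rule real_distribution_distr) simp
    fix n \<theta> t assume w: "prob_weights n \<theta>"
    let ?P = "PiM {..<n} (\<lambda>_. \<mu>)"
    interpret P: prob_space ?P by (intro prob_space_PiM) (simp add: prob_space_axioms)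
    have "cdf (weighted_sum_law (distr \<mu> borel \<phi>) n \<theta>) t =
        measure ?P {x \<in> space ?P. (\<Sum>i<n. \<theta> i * \<phi> (x i)) \<le> t}"
      using prob_weights_nonempty[OF w]
      by (simp add: weighted_sum_law_distr prob_space_axioms cdf_distr)
    also have "\<dots> \<le> measure ?P {x \<in> space ?P. \<phi> (\<Sum>i<n. \<theta> i * x i) \<le> t}"
    proof (rule P.finite_measure_mono)
      have "\<phi> (\<Sum>i<n. \<theta> i * x i) \<le> (\<Sum>i<n. \<theta> i * \<phi> (x i))" for x
        using convex_on_weighted_sum[OF w cvx, of x] by simp
      then show "{x \<in> space ?P. (\<Sum>i<n. \<theta> i * \<phi> (x i)) \<le> t} \<subseteq>
          {x \<in> space ?P. \<phi> (\<Sum>i<n. \<theta> i * x i) \<le> t}"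
        by (auto intro: order_trans)
    qed measurable
    also have "\<dots> = measure (weighted_sum_law \<mu> n \<theta>) {z. \<phi> z \<le> t}"
      unfolding weighted_sum_law_def by (subst measure_distr) (auto simp: vimage_def Int_def conj_commute)
    also have "\<dots> \<le> measure \<mu> {z. \<phi> z \<le> t}"
      using D w by (intro stoch_le_measure_downset real_distribution_weighted_sum_law)
        (auto simp: D_minus_iff dest: monoD[OF mono])
    also have "\<dots> = cdf (distr \<mu> borel \<phi>) t"
      by (simp add: cdf_distr)
    finally show "cdf (weighted_sum_law (distr \<mu> borel \<phi>) n \<theta>) t \<le> cdf (distr \<mu> borel \<phi>) t" .
  qed
qed

lemma D_minus_rv_convex_mono:
  assumes X: "X \<in> borel_measurable M" and D: "D_minus_rv M X"
    and mono: "mono \<phi>" and cvx: "convex_on UNIV \<phi>"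
  shows "D_minus_rv M (\<lambda>\<omega>. \<phi> (X \<omega>))"
proof -
  have "\<phi> \<in> borel_measurable borel"
    using cvx by (rule convex_on_UNIV_borel_measurable)
  then have "distr M borel (\<lambda>\<omega>. \<phi> (X \<omega>)) = distr (distr M borel X) borel \<phi>"
    using X by (subst distr_distr) (simp_all add: comp_def)
  then show ?thesis
    using D_minus_distr_convex_mono[OF _ mono cvx] D by (simp add: D_minus_rv_def)
qed

lemma D_minus_rv_affine:
  assumes "X \<in> borel_measurable M" "D_minus_rv M X" "0 < a"
  shows "D_minus_rv M (\<lambda>\<omega>. a * X \<omega> + b)"
proof (rule D_minus_rv_convex_mono[OF assms(1,2)])
  show "mono (\<lambda>x. a * x + b)"
    using \<open>0 < a\<close> by (auto simp: mono_def)
  show "convex_on UNIV (\<lambda>x. a * x + b)"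
    using \<open>0 < a\<close> by (intro convex_on_add convex_on_cmul convex_on_ident[THEN iffD2] convex_on_const[THEN iffD2]) auto
qed

lemma (in prob_space) indep_var_of_indep_vars:
  assumes "indep_vars M' X I" "i \<in> I" "j \<in> I" "i \<noteq> j"
  shows "indep_var (M' i) (X i) (M' j) (X j)"
proof -
  have "indep_var (PiM {i} M') (\<lambda>\<omega>. restrict (\<lambda>k. X k \<omega>) {i}) (PiM {j} M') (\<lambda>\<omega>. restrict (\<lambda>k. X k \<omega>) {j})"
    using assms by (intro indep_var_restrict) auto
  from indep_var_compose[OF this measurable_component_singleton measurable_component_singleton]
  show ?thesis by (simp add: comp_def)
qed

lemma distr_indep_pair:
  assumes "prob_space M" and [measurable]: "X \<in> borel_measurable M" "Y \<in> borel_measurable M"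
    and indep: "prob_space.indep_var M borel X borel Y"
    and [measurable]: "f \<in> borel_measurable (borel \<Otimes>\<^sub>M borel)"
  shows "distr M borel (\<lambda>\<omega>. f (X \<omega>, Y \<omega>)) = distr (distr M borel X \<Otimes>\<^sub>M distr M borel Y) borel f"
proof -
  have "distr M borel X \<Otimes>\<^sub>M distr M borel Y = distr M (borel \<Otimes>\<^sub>M borel) (\<lambda>\<omega>. (X \<omega>, Y \<omega>))"
    using prob_space.indep_var_distribution_eq[OF \<open>prob_space M\<close>] indep by blast
  then show ?thesis
    by (simp add: distr_distr comp_def)
qed

text \<open>Coordinates \<open>i\<close> and \<open>n + i\<close> carry the \<open>i\<close>-th independent pair \<open>(X\<^sub>i, Y\<^sub>i)\<close>.\<close>
definition pair_sample_space :: "real measure \<Rightarrow> real measure \<Rightarrow> nat \<Rightarrow> (nat \<Rightarrow> real) measure" where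
  "pair_sample_space \<mu> \<nu> n = PiM {..<2*n} (\<lambda>j. if j < n then \<mu> else \<nu>)"

context
  fixes \<mu> \<nu> :: "real measure" and n :: nat
  assumes \<mu>: "real_distribution \<mu>" and \<nu>: "real_distribution \<nu>" and n: "n \<noteq> 0"
begin

interpretation \<mu>: real_distribution \<mu> by (rule \<mu>)
interpretation \<nu>: real_distribution \<nu> by (rule \<nu>)

lemma prob_space_pair_sample_space: "prob_space (pair_sample_space \<mu> \<nu> n)"
  unfolding pair_sample_space_def
  by (intro prob_space_PiM) (simp add: \<mu>.prob_space_axioms \<nu>.prob_space_axioms)

interpretation O: prob_space "pair_sample_space \<mu> \<nu> n"
  by (rule prob_space_pair_sample_space)

lemma pair_sample_space_component:
  assumes "j < 2*n"
  shows "(\<lambda>z. z j) \<in> measurable (pair_sample_space \<mu> \<nu> n) (if j < n then \<mu> else \<nu>)"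
  unfolding pair_sample_space_def using assms by (intro measurable_component_singleton) simp

lemma measurable_pair_sample_space_component [measurable]:
  "j < 2*n \<Longrightarrow> (\<lambda>z. z j) \<in> borel_measurable (pair_sample_space \<mu> \<nu> n)"
proof -
  assume "j < 2*n"
  have "sets (if j < n then \<mu> else \<nu>) = sets borel" by simp
  with pair_sample_space_component[OF \<open>j < 2*n\<close>] show ?thesis
    by (simp cong: measurable_cong_sets)
qed

lemma distr_pair_sample_space_component:
  assumes "j < 2*n"
  shows "distr (pair_sample_space \<mu> \<nu> n) borel (\<lambda>z. z j) = (if j < n then \<mu> else \<nu>)"
proof -
  have "distr (pair_sample_space \<mu> \<nu> n) (if j < n then \<mu> else \<nu>) (\<lambda>z. z j) = (if j < n then \<mu> else \<nu>)"
    unfolding pair_sample_space_def using assms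
    by (intro distr_PiM_component) (simp_all add: \<mu>.prob_space_axioms \<nu>.prob_space_axioms)
  then show ?thesis
    by (subst distr_cong[OF refl _ refl]) simp_all
qed

lemma indep_vars_pair_sample_space:
  "O.indep_vars (\<lambda>_. borel) (\<lambda>j z. z j) {..<2*n}"
proof -
  have "O.indep_vars (\<lambda>j. if j < n then \<mu> else \<nu>) (\<lambda>j z. z j) {..<2*n}"
    unfolding pair_sample_space_def using n
    by (intro indep_vars_PiM_components)
       (simp_all add: \<mu>.prob_space_axioms \<nu>.prob_space_axioms lessThan_empty_iff)
  then show ?thesis
    by (rule O.indep_vars_compose2[where Y="\<lambda>_ x. x", simplified]) simp
qed

lemma indep_vars_pair_sample_space_blocks:
  assumes [measurable]: "g \<in> borel_measurable (borel \<Otimes>\<^sub>M borel)"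
  shows "O.indep_vars (\<lambda>_. borel) (\<lambda>i z. g (z i, z (n+i))) {..<n}"
proof -
  have "O.indep_vars (\<lambda>i. PiM {i, n+i} (\<lambda>_. borel)) (\<lambda>i z. restrict (\<lambda>j. z j) {i, n+i}) {..<n}"
    by (rule O.indep_vars_restrict[OF indep_vars_pair_sample_space])
       (auto simp: disjoint_family_on_def)
  then have "O.indep_vars (\<lambda>_. borel) (\<lambda>i z. (\<lambda>w. g (w i, w (n+i))) (restrict (\<lambda>j. z j) {i, n+i})) {..<n}"
    by (rule O.indep_vars_compose2) measurable
  then show ?thesis by simp
qed

lemma distr_pair_sample_space_block:
  assumes [measurable]: "g \<in> borel_measurable (borel \<Otimes>\<^sub>M borel)" and "i < n"
  shows "distr (pair_sample_space \<mu> \<nu> n) borel (\<lambda>z. g (z i, z (n+i))) = distr (\<mu> \<Otimes>\<^sub>M \<nu>) borel g"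
proof -
  have "O.indep_var borel (\<lambda>z. z i) borel (\<lambda>z. z (n+i))"
    using \<open>i < n\<close> by (intro O.indep_var_of_indep_vars[OF indep_vars_pair_sample_space]) auto
  with \<open>i < n\<close> show ?thesis
    by (subst distr_indep_pair) (simp_all add: prob_space_pair_sample_space distr_pair_sample_space_component)
qed

lemma distr_pair_sample_space_weighted_sum:
  assumes "g \<in> borel_measurable (borel \<Otimes>\<^sub>M borel)"
  shows "distr (pair_sample_space \<mu> \<nu> n) borel (\<lambda>z. \<Sum>i<n. \<theta> i * g (z i, z (n+i))) =
    weighted_sum_law (distr (\<mu> \<Otimes>\<^sub>M \<nu>) borel g) n \<theta>"
  by (rule distr_weighted_sum_iid[OF prob_space_pair_sample_space n
        indep_vars_pair_sample_space_blocks[OF assms]])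
     (simp_all add: distr_pair_sample_space_block[OF assms] measurable_compose[OF _ assms])

lemma distr_pair_sample_space_weighted_sums:
  "distr (pair_sample_space \<mu> \<nu> n) (borel \<Otimes>\<^sub>M borel) (\<lambda>z. (\<Sum>i<n. \<theta> i * z i, \<Sum>i<n. \<theta> i * z (n+i)))
     = weighted_sum_law \<mu> n \<theta> \<Otimes>\<^sub>M weighted_sum_law \<nu> n \<theta>"
proof -
  have blocks: "O.indep_var (PiM {..<n} (\<lambda>_. borel)) (\<lambda>z. restrict (\<lambda>j. z j) {..<n})
      (PiM {n..<2*n} (\<lambda>_. borel)) (\<lambda>z. restrict (\<lambda>j. z j) {n..<2*n})"
    by (rule O.indep_var_restrict[OF indep_vars_pair_sample_space]) auto
  have "(\<lambda>w. \<Sum>i<n. \<theta> i * w i) \<in> borel_measurable (PiM {..<n} (\<lambda>_. borel))"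
    "(\<lambda>w. \<Sum>i<n. \<theta> i * w (n+i)) \<in> borel_measurable (PiM {n..<2*n} (\<lambda>_. borel))"
    by measurable
  from O.indep_var_compose[OF blocks this]
  have indep: "O.indep_var borel (\<lambda>z. \<Sum>i<n. \<theta> i * z i) borel (\<lambda>z. \<Sum>i<n. \<theta> i * z (n+i))"
    by (simp add: comp_def)
  have fst: "distr (pair_sample_space \<mu> \<nu> n) borel (\<lambda>z. \<Sum>i<n. \<theta> i * z i) = weighted_sum_law \<mu> n \<theta>"
    using n O.indep_vars_subset[OF indep_vars_pair_sample_space, of "{..<n}"]
    by (intro distr_weighted_sum_iid prob_space_pair_sample_space)
       (auto simp: distr_pair_sample_space_component)
  have snd: "distr (pair_sample_space \<mu> \<nu> n) borel (\<lambda>z. \<Sum>i<n. \<theta> i * z (n+i)) = weighted_sum_law \<nu> n \<theta>"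
    using n indep_vars_pair_sample_space_blocks[of snd]
    by (intro distr_weighted_sum_iid prob_space_pair_sample_space)
       (auto simp: distr_pair_sample_space_component)
  from indep show ?thesis
    by (simp add: O.indep_var_distribution_eq fst snd)
qed

lemma cdf_weighted_sum_law_convex_le:
  assumes w: "prob_weights n \<theta>" and cvx: "convex_on UNIV f"
  shows "cdf (weighted_sum_law (distr (\<mu> \<Otimes>\<^sub>M \<nu>) borel f) n \<theta>) t \<le>
    measure (weighted_sum_law \<mu> n \<theta> \<Otimes>\<^sub>M weighted_sum_law \<nu> n \<theta>) {p. f p \<le> t}"
proof -
  let ?O = "pair_sample_space \<mu> \<nu> n"
  let ?h = "\<lambda>z. (\<Sum>i<n. \<theta> i * z i, \<Sum>i<n. \<theta> i * z (n+i))"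
  have f [measurable]: "f \<in> borel_measurable (borel \<Otimes>\<^sub>M borel)"
    using convex_on_UNIV_borel_measurable[OF cvx] by (simp add: borel_prod)
  have h: "?h \<in> measurable ?O (borel \<Otimes>\<^sub>M borel)" by measurable
  have "cdf (weighted_sum_law (distr (\<mu> \<Otimes>\<^sub>M \<nu>) borel f) n \<theta>) t =
      measure ?O {z \<in> space ?O. (\<Sum>i<n. \<theta> i * f (z i, z (n+i))) \<le> t}"
    by (simp add: distr_pair_sample_space_weighted_sum[OF f, symmetric] cdf_distr)
  also have "\<dots> \<le> measure ?O {z \<in> space ?O. f (?h z) \<le> t}"
  proof (rule O.finite_measure_mono)
    have "f (?h z) \<le> (\<Sum>i<n. \<theta> i * f (z i, z (n+i)))" for z
      using convex_on_weighted_sum[OF w cvx, of "\<lambda>i. (z i, z (n+i))"] by (simp add: sum_prod)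
    then show "{z \<in> space ?O. (\<Sum>i<n. \<theta> i * f (z i, z (n+i))) \<le> t} \<subseteq> {z \<in> space ?O. f (?h z) \<le> t}"
      by (auto intro: order_trans)
  qed (use h in measurable)
  also have "\<dots> = measure (distr ?O (borel \<Otimes>\<^sub>M borel) ?h) {p. f p \<le> t}"
    using h sets_pair_borel_le[OF f]
    by (subst measure_distr) (auto simp: vimage_def Int_def conj_commute space_pair_measure)
  finally show ?thesis
    by (simp add: distr_pair_sample_space_weighted_sums)
qed

end

lemma D_minus_distr_pair_convex_mono:
  assumes D\<mu>: "D_minus \<mu>" and D\<nu>: "D_minus \<nu>" and cvx: "convex_on UNIV f"
    and mono: "\<And>x y x' y'. x \<le> x' \<Longrightarrow> y \<le> y' \<Longrightarrow> f (x, y) \<le> f (x', y')"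
  shows "D_minus (distr (\<mu> \<Otimes>\<^sub>M \<nu>) borel f)"
proof -
  have \<mu>: "real_distribution \<mu>" and \<nu>: "real_distribution \<nu>"
    using D\<mu> D\<nu> by (simp_all add: D_minus_real_distribution)
  interpret \<mu>\<nu>: prob_space "\<mu> \<Otimes>\<^sub>M \<nu>"
    using \<mu> \<nu> by (intro prob_space_pair) (simp_all add: real_distribution_def)
  have f [measurable]: "f \<in> borel_measurable (borel \<Otimes>\<^sub>M borel)"
    using convex_on_UNIV_borel_measurable[OF cvx] by (simp add: borel_prod)
  have sets_\<mu>\<nu>: "sets (\<mu> \<Otimes>\<^sub>M \<nu>) = sets (borel \<Otimes>\<^sub>M borel)"
    using \<mu> \<nu> by (intro sets_pair_measure_cong) (simp_all add: real_distribution.events_eq_borel)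
  show ?thesis
  proof (rule D_minusI)
    show "real_distribution (distr (\<mu> \<Otimes>\<^sub>M \<nu>) borel f)"
      using f by (intro \<mu>\<nu>.real_distribution_distr) (simp cong: measurable_cong_sets add: sets_\<mu>\<nu>)
    fix n \<theta> t assume w: "prob_weights n \<theta>"
    have "cdf (weighted_sum_law (distr (\<mu> \<Otimes>\<^sub>M \<nu>) borel f) n \<theta>) t \<le>
        measure (weighted_sum_law \<mu> n \<theta> \<Otimes>\<^sub>M weighted_sum_law \<nu> n \<theta>) {p. f p \<le> t}"
      by (rule cdf_weighted_sum_law_convex_le[OF \<mu> \<nu> prob_weights_nonempty[OF w] w cvx])
    also have "\<dots> \<le> measure (\<mu> \<Otimes>\<^sub>M \<nu>) {p. f p \<le> t}"
      using D\<mu> D\<nu> w mono sets_pair_borel_le[OF f]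
      by (intro stoch_le_measure_pair_downset real_distribution_weighted_sum_law \<mu> \<nu>)
         (auto simp: D_minus_iff intro: order_trans[OF mono])
    also have "\<dots> = cdf (distr (\<mu> \<Otimes>\<^sub>M \<nu>) borel f) t"
      using f \<mu> \<nu>
      by (simp add: cdf_distr sets_\<mu>\<nu> space_pair_measure real_distribution.space_eq_univ
          cong: measurable_cong_sets)
    finally show "cdf (weighted_sum_law (distr (\<mu> \<Otimes>\<^sub>M \<nu>) borel f) n \<theta>) t \<le> cdf (distr (\<mu> \<Otimes>\<^sub>M \<nu>) borel f) t" .
  qed
qed

lemma D_minus_rv_indep_convex_mono:
  assumes "prob_space M" "X \<in> borel_measurable M" "Y \<in> borel_measurable M"
    and "D_minus_rv M X" "D_minus_rv M Y" "prob_space.indep_var M borel X borel Y"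
    and cvx: "convex_on UNIV f"
    and mono: "\<And>x y x' y'. x \<le> x' \<Longrightarrow> y \<le> y' \<Longrightarrow> f (x, y) \<le> f (x', y')"
  shows "D_minus_rv M (\<lambda>\<omega>. f (X \<omega>, Y \<omega>))"
proof -
  have "f \<in> borel_measurable (borel \<Otimes>\<^sub>M borel)"
    using convex_on_UNIV_borel_measurable[OF cvx] by (simp add: borel_prod)
  then show ?thesis
    using assms D_minus_distr_pair_convex_mono[OF _ _ cvx mono]
    by (simp add: D_minus_rv_def distr_indep_pair)
qed

lemma set_less_limit_subset_eventually_le:
  fixes Xs :: "nat \<Rightarrow> 'a \<Rightarrow> real"
  assumes "\<And>x. x \<in> A \<Longrightarrow> (\<lambda>k. Xs k x) \<longlonglongrightarrow> X x"
  shows "{x \<in> A. X x < s} \<subseteq> (\<Union>m. {x \<in> A. \<forall>k\<ge>m. Xs k x \<le> s})"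
proof safe
  fix x assume x: "x \<in> A" "X x < s"
  have "eventually (\<lambda>k. Xs k x < s) sequentially"
    using order_tendstoD(2)[OF assms x(2)] x(1) .
  with x show "x \<in> (\<Union>m. {x \<in> A. \<forall>k\<ge>m. Xs k x \<le> s})"
    by (auto simp: eventually_sequentially intro: less_imp_le)
qed

lemma set_frequently_le_subset_limit_le:
  fixes Ys :: "nat \<Rightarrow> 'a \<Rightarrow> real"
  assumes "\<And>y. y \<in> B \<Longrightarrow> (\<lambda>k. Ys k y) \<longlonglongrightarrow> Y y"
  shows "(\<Inter>m. {y \<in> B. \<exists>k\<ge>m. Ys k y \<le> s}) \<subseteq> {y \<in> B. Y y \<le> s}"
proof safe
  fix y assume y: "y \<in> (\<Inter>m. {y \<in> B. \<exists>k\<ge>m. Ys k y \<le> s})"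
  then show "y \<in> B" by auto
  show "Y y \<le> s"
  proof (rule ccontr)
    assume "\<not> Y y \<le> s"
    then have "eventually (\<lambda>k. s < Ys k y) sequentially"
      using order_tendstoD(1)[OF assms] \<open>y \<in> B\<close> by simp
    then obtain m where "\<forall>k\<ge>m. s < Ys k y" by (auto simp: eventually_sequentially)
    with y show False by force
  qed
qed

lemma measure_less_le_of_pointwise_limits:
  fixes Xs :: "nat \<Rightarrow> 'a \<Rightarrow> real" and Ys :: "nat \<Rightarrow> 'b \<Rightarrow> real"
  assumes P: "prob_space P" and Q: "prob_space Q"
    and [measurable]: "\<And>k. Xs k \<in> borel_measurable P" "X \<in> borel_measurable P"
      "\<And>k. Ys k \<in> borel_measurable Q" "Y \<in> borel_measurable Q"
    and X: "\<And>x. x \<in> space P \<Longrightarrow> (\<lambda>k. Xs k x) \<longlonglongrightarrow> X x"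
    and Y: "\<And>y. y \<in> space Q \<Longrightarrow> (\<lambda>k. Ys k y) \<longlonglongrightarrow> Y y"
    and le: "\<And>k. measure P {x \<in> space P. Xs k x \<le> s} \<le> measure Q {y \<in> space Q. Ys k y \<le> s}"
  shows "measure P {x \<in> space P. X x < s} \<le> measure Q {y \<in> space Q. Y y \<le> s}"
proof -
  interpret P: prob_space P by fact
  interpret Q: prob_space Q by fact
  define G where "G m = {x \<in> space P. \<forall>k\<ge>m. Xs k x \<le> s}" for m
  define H where "H m = {y \<in> space Q. \<exists>k\<ge>m. Ys k y \<le> s}" for m
  have G: "range G \<subseteq> sets P" and H: "range H \<subseteq> sets Q"
    unfolding G_def H_def by auto
  have "(\<lambda>m. measure P (G m)) \<longlonglongrightarrow> measure P (\<Union>m. G m)"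
    by (rule P.finite_Lim_measure_incseq[OF G]) (auto simp: incseq_def G_def)
  moreover have "(\<lambda>m. measure Q (H m)) \<longlonglongrightarrow> measure Q (\<Inter>m. H m)"
    by (rule Q.finite_Lim_measure_decseq[OF H]) (auto simp: decseq_def H_def intro: order_trans)
  moreover have "measure P (G m) \<le> measure Q (H m)" for m
  proof -
    have "measure P (G m) \<le> measure P {x \<in> space P. Xs m x \<le> s}"
      by (rule P.finite_measure_mono) (auto simp: G_def)
    also have "\<dots> \<le> measure Q {y \<in> space Q. Ys m y \<le> s}" by (rule le)
    also have "\<dots> \<le> measure Q (H m)"
      by (rule Q.finite_measure_mono) (auto simp: H_def)
    finally show ?thesis .
  qed
  ultimately have lim_le: "measure P (\<Union>m. G m) \<le> measure Q (\<Inter>m. H m)"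
    by (meson LIMSEQ_le)
  have "measure P {x \<in> space P. X x < s} \<le> measure P (\<Union>m. G m)"
    using set_less_limit_subset_eventually_le[where A="space P", OF X] G
    by (intro P.finite_measure_mono) (auto simp: G_def)
  also note lim_le
  also have "measure Q (\<Inter>m. H m) \<le> measure Q {y \<in> space Q. Y y \<le> s}"
    using set_frequently_le_subset_limit_le[where B="space Q", OF Y]
    by (intro Q.finite_measure_mono) (auto simp: H_def)
  finally show ?thesis .
qed

lemma measure_le_of_pointwise_limits:
  fixes Xs :: "nat \<Rightarrow> 'a \<Rightarrow> real" and Ys :: "nat \<Rightarrow> 'b \<Rightarrow> real"
  assumes P: "prob_space P" and Q: "prob_space Q"
    and [measurable]: "\<And>k. Xs k \<in> borel_measurable P" "X \<in> borel_measurable P"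
      "\<And>k. Ys k \<in> borel_measurable Q" "Y \<in> borel_measurable Q"
    and X: "\<And>x. x \<in> space P \<Longrightarrow> (\<lambda>k. Xs k x) \<longlonglongrightarrow> X x"
    and Y: "\<And>y. y \<in> space Q \<Longrightarrow> (\<lambda>k. Ys k y) \<longlonglongrightarrow> Y y"
    and le: "\<And>k s. measure P {x \<in> space P. Xs k x \<le> s} \<le> measure Q {y \<in> space Q. Ys k y \<le> s}"
  shows "measure P {x \<in> space P. X x \<le> t} \<le> measure Q {y \<in> space Q. Y y \<le> t}"
proof -
  interpret P: prob_space P by fact
  interpret Y: real_distribution "distr Q borel Y"
    using Q by (intro prob_space.real_distribution_distr) simp_all
  have "eventually (\<lambda>s. measure P {x \<in> space P. X x \<le> t} \<le> cdf (distr Q borel Y) s) (at_right t)"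
  proof (rule eventually_at_rightI)
    fix s assume "s \<in> {t<..<t + 1}"
    then have "measure P {x \<in> space P. X x \<le> t} \<le> measure P {x \<in> space P. X x < s}"
      by (intro P.finite_measure_mono) auto
    also have "\<dots> \<le> measure Q {y \<in> space Q. Y y \<le> s}"
      by (rule measure_less_le_of_pointwise_limits[OF P Q _ _ _ _ X Y le]) simp_all
    finally show "measure P {x \<in> space P. X x \<le> t} \<le> cdf (distr Q borel Y) s"
      by (simp add: cdf_distr)
  qed simp
  from tendsto_lowerbound[OF Y.cdf_is_right_cont[unfolded continuous_within] this]
  show ?thesis by (simp add: cdf_distr)
qed

lemma D_minus_weak_conv_limit:
  assumes D: "\<And>k. D_minus (\<mu>s k)" and \<mu>: "real_distribution \<mu>" and conv: "weak_conv_m \<mu>s \<mu>"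
  shows "D_minus \<mu>"
proof (rule D_minusI[OF \<mu>])
  fix n \<theta> t assume w: "prob_weights n \<theta>"
  note n = prob_weights_nonempty[OF w]
  obtain \<Omega> :: "real measure" and Ys Y where \<Omega>: "prob_space \<Omega>"
    and Ys [measurable]: "\<And>k. Ys k \<in> borel_measurable \<Omega>" and Ys_law: "\<And>k. distr \<Omega> borel (Ys k) = \<mu>s k"
    and Y: "Y \<in> measurable \<Omega> lborel" and Y_law: "distr \<Omega> borel Y = \<mu>"
    and Ys_Y: "\<And>x. x \<in> space \<Omega> \<Longrightarrow> (\<lambda>k. Ys k x) \<longlonglongrightarrow> Y x"
    using Skorohod[OF D_minus_real_distribution[OF D] \<mu> conv] by blast
  have [measurable]: "Y \<in> borel_measurable \<Omega>"
    using Y by (simp cong: measurable_cong_sets)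
  let ?P = "PiM {..<n} (\<lambda>_. \<Omega>)"
  interpret P: prob_space ?P by (intro prob_space_PiM) (simp add: \<Omega>)
  have law: "cdf (weighted_sum_law (distr \<Omega> borel g) n \<theta>) s =
      measure ?P {z \<in> space ?P. (\<Sum>i<n. \<theta> i * g (z i)) \<le> s}"
    if [measurable]: "g \<in> borel_measurable \<Omega>" for g s
  proof -
    have "(\<lambda>z. \<Sum>i<n. \<theta> i * g (z i)) \<in> borel_measurable ?P" by measurable
    then show ?thesis by (simp add: weighted_sum_law_distr[OF \<Omega> n that] cdf_distr)
  qed
  have "measure ?P {z \<in> space ?P. (\<Sum>i<n. \<theta> i * Y (z i)) \<le> t} \<le> measure \<Omega> {x \<in> space \<Omega>. Y x \<le> t}"
  proof (rule measure_le_of_pointwise_limits[OF P.prob_space_axioms \<Omega>])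
    show "(\<lambda>k. \<Sum>i<n. \<theta> i * Ys k (z i)) \<longlonglongrightarrow> (\<Sum>i<n. \<theta> i * Y (z i))" if "z \<in> space ?P" for z
      using that by (intro tendsto_sum tendsto_mult tendsto_const Ys_Y) (auto simp: space_PiM)
    show "measure ?P {z \<in> space ?P. (\<Sum>i<n. \<theta> i * Ys k (z i)) \<le> s} \<le> measure \<Omega> {x \<in> space \<Omega>. Ys k x \<le> s}"
      for k s
      using D_minusD[OF D w, of k s] by (simp add: law Ys_law[symmetric] cdf_distr)
  qed (auto intro: Ys_Y)
  then show "cdf (weighted_sum_law \<mu> n \<theta>) t \<le> cdf \<mu> t"
    by (simp add: law Y_law[symmetric] cdf_distr)
qed

lemma nn_integral_pos_part_layer_cake:
  assumes "real_distribution \<alpha>"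
  shows "(\<integral>\<^sup>+x. ennreal (max 0 (x - m)) \<partial>\<alpha>) = (\<integral>\<^sup>+s. indicator {m..} s * emeasure \<alpha> {s<..} \<partial>lborel)"
proof -
  interpret real_distribution \<alpha> by fact
  interpret pair_sigma_finite lborel \<alpha> by unfold_locales
  have "(\<lambda>p::real \<times> real. indicator {m..<snd p} (fst p) :: ennreal) \<in> borel_measurable (borel \<Otimes>\<^sub>M borel)"
    by (simp add: indicator_def) measurable
  moreover have "sets (lborel \<Otimes>\<^sub>M \<alpha>) = sets (borel \<Otimes>\<^sub>M borel)"
    by (intro sets_pair_measure_cong) auto
  ultimately have meas: "(\<lambda>(s, y). indicator {m..<y} s :: ennreal) \<in> borel_measurable (lborel \<Otimes>\<^sub>M \<alpha>)"
    by (simp add: case_prod_beta' cong: measurable_cong_sets)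
  have inner: "(\<integral>\<^sup>+y. indicator {m..<y} s \<partial>\<alpha>) = indicator {m..} s * emeasure \<alpha> {s<..}" for s
  proof -
    have "(\<integral>\<^sup>+y. indicator {m..<y} s \<partial>\<alpha>) = (\<integral>\<^sup>+y. indicator {m..} s * indicator {s<..} y \<partial>\<alpha>)"
      by (intro nn_integral_cong) (auto simp: indicator_def)
    then show ?thesis by (simp add: nn_integral_cmult_indicator)
  qed
  have "(\<integral>\<^sup>+x. ennreal (max 0 (x - m)) \<partial>\<alpha>) = (\<integral>\<^sup>+y. (\<integral>\<^sup>+s. indicator {m..<y} s \<partial>lborel) \<partial>\<alpha>)"
    by (intro nn_integral_cong) (simp add: max_def)
  also have "\<dots> = (\<integral>\<^sup>+s. (\<integral>\<^sup>+y. indicator {m..<y} s \<partial>\<alpha>) \<partial>lborel)"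
    by (rule Fubini'[OF meas])
  finally show ?thesis by (simp add: inner)
qed

lemma stoch_le_nn_integral_pos_part:
  assumes \<alpha>: "real_distribution \<alpha>" and \<beta>: "real_distribution \<beta>" and le: "stoch_le \<alpha> \<beta>"
  shows "(\<integral>\<^sup>+x. ennreal (max 0 (x - m)) \<partial>\<alpha>) \<le> (\<integral>\<^sup>+x. ennreal (max 0 (x - m)) \<partial>\<beta>)"
proof -
  interpret \<alpha>: real_distribution \<alpha> by fact
  interpret \<beta>: real_distribution \<beta> by fact
  have "emeasure \<alpha> {s<..} \<le> emeasure \<beta> {s<..}" for s
  proof -
    have "{s<..} = UNIV - {..s}" by auto
    then have "measure \<alpha> {s<..} \<le> measure \<beta> {s<..}"
      using \<alpha>.prob_compl[of "{..s}"] \<beta>.prob_compl[of "{..s}"] le by (simp add: stoch_le_def cdf_def)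
    then show ?thesis by (simp add: \<alpha>.emeasure_eq_measure \<beta>.emeasure_eq_measure)
  qed
  then show ?thesis
    unfolding nn_integral_pos_part_layer_cake[OF \<alpha>] nn_integral_pos_part_layer_cake[OF \<beta>]
    by (intro nn_integral_mono mult_left_mono) auto
qed

lemma integral_pos_part_centered:
  fixes f :: "'a \<Rightarrow> real"
  assumes "prob_space M" "integrable M f"
  shows "(\<integral>x. max 0 (f x - (\<integral>x. f x \<partial>M)) \<partial>M) = (\<integral>x. \<bar>f x - (\<integral>x. f x \<partial>M)\<bar> \<partial>M) / 2"
proof -
  interpret prob_space M by fact
  let ?m = "\<integral>x. f x \<partial>M"
  have "(\<integral>x. max 0 (f x - ?m) \<partial>M) = (\<integral>x. (\<bar>f x - ?m\<bar> + (f x - ?m)) / 2 \<partial>M)"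
    by (intro Bochner_Integration.integral_cong) (auto simp: max_def)
  also have "\<dots> = ((\<integral>x. \<bar>f x - ?m\<bar> \<partial>M) + (\<integral>x. f x - ?m \<partial>M)) / 2"
    using assms(2) by simp
  finally show ?thesis
    using assms(2) by (simp add: prob_space)
qed

lemma
  fixes g :: "'a \<Rightarrow> real"
  assumes "prob_space \<mu>" "finite I" "i \<in> I" "g \<in> borel_measurable \<mu>"
  shows integrable_PiM_component: "integrable (PiM I (\<lambda>_. \<mu>)) (\<lambda>z. g (z i)) \<longleftrightarrow> integrable \<mu> g"
    and integral_PiM_component: "(\<integral>z. g (z i) \<partial>PiM I (\<lambda>_. \<mu>)) = (\<integral>x. g x \<partial>\<mu>)"
proof -
  have comp: "(\<lambda>z. z i) \<in> measurable (PiM I (\<lambda>_. \<mu>)) \<mu>"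
    using assms by simp
  have law: "distr (PiM I (\<lambda>_. \<mu>)) \<mu> (\<lambda>z. z i) = \<mu>"
    using assms by (intro distr_PiM_component) auto
  show "integrable (PiM I (\<lambda>_. \<mu>)) (\<lambda>z. g (z i)) \<longleftrightarrow> integrable \<mu> g"
    using integrable_distr_eq[OF comp assms(4)] by (simp add: law)
  show "(\<integral>z. g (z i) \<partial>PiM I (\<lambda>_. \<mu>)) = (\<integral>x. g x \<partial>\<mu>)"
    using integral_distr[OF comp assms(4)] by (simp add: law)
qed

lemma emeasure_mult_eq_0_of_AE_PiM2:
  assumes "prob_space \<mu>" and A: "A \<in> sets \<mu>" and B: "B \<in> sets \<mu>"
    and AE: "AE z in PiM {..<2::nat} (\<lambda>_. \<mu>). P z"
    and [measurable]: "Measurable.pred (PiM {..<2::nat} (\<lambda>_. \<mu>)) P"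
    and not_P: "\<And>z. z 0 \<in> A \<Longrightarrow> z 1 \<in> B \<Longrightarrow> \<not> P z"
  shows "emeasure \<mu> A * emeasure \<mu> B = 0"
proof -
  interpret \<mu>: prob_space \<mu> by fact
  interpret product_sigma_finite "\<lambda>_::nat. \<mu>"
    by (simp add: product_sigma_finite_def \<mu>.sigma_finite_measure_axioms)
  let ?P = "PiM {..<2::nat} (\<lambda>_. \<mu>)"
  define C where "C i = (if i = 0 then A else B)" for i :: nat
  have C: "C i \<in> sets \<mu>" for i
    using A B by (simp add: C_def)
  have not_P_set: "{z \<in> space ?P. \<not> P z} \<in> sets ?P"
    by measurable
  have "Pi\<^sub>E {..<2} C \<subseteq> {z \<in> space ?P. \<not> P z}"
  proof
    fix z assume z: "z \<in> Pi\<^sub>E {..<2} C"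
    then have "z 0 \<in> A" "z 1 \<in> B"
      using PiE_mem[OF z, of 0] PiE_mem[OF z, of 1] by (simp_all add: C_def)
    moreover have "z \<in> space ?P"
      using z sets.sets_into_space[OF C] by (auto simp: space_PiM PiE_iff)
    ultimately show "z \<in> {z \<in> space ?P. \<not> P z}"
      using not_P by simp
  qed
  then have "emeasure ?P (Pi\<^sub>E {..<2} C) = 0"
    using emeasure_mono[OF _ not_P_set] AE_iff_measurable[OF not_P_set refl] AE by simp
  moreover have "emeasure ?P (Pi\<^sub>E {..<2} C) = (\<Prod>i<2. emeasure \<mu> (C i))"
    using C by (intro emeasure_PiM) auto
  ultimately show ?thesis
    by (simp add: numeral_2_eq_2 lessThan_Suc C_def mult.commute)
qed

lemma emeasure_pos_neg_zero_of_abs_add: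
  fixes f :: "'a \<Rightarrow> real"
  assumes "prob_space \<mu>" and [measurable]: "f \<in> borel_measurable \<mu>" and int: "integrable \<mu> f"
    and le: "2 * (\<integral>x. \<bar>f x\<bar> \<partial>\<mu>) \<le> (\<integral>z. \<bar>f (z 0) + f (z 1)\<bar> \<partial>PiM {..<2::nat} (\<lambda>_. \<mu>))"
  shows "emeasure \<mu> {x \<in> space \<mu>. 0 < f x} * emeasure \<mu> {x \<in> space \<mu>. f x < 0} = 0"
proof -
  let ?P = "PiM {..<2} (\<lambda>_::nat. \<mu>)"
  have abs_f: "(\<lambda>x. \<bar>f x\<bar>) \<in> borel_measurable \<mu>" by measurable
  have comp_f: "integrable ?P (\<lambda>z. f (z i))" if "i < 2" for i
    using that int by (simp add: integrable_PiM_component \<open>prob_space \<mu>\<close>)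
  have comp_int: "integrable ?P (\<lambda>z. \<bar>f (z i)\<bar>)" "(\<integral>z. \<bar>f (z i)\<bar> \<partial>?P) = (\<integral>x. \<bar>f x\<bar> \<partial>\<mu>)"
    if "i < 2" for i
    using that comp_f integral_PiM_component[OF \<open>prob_space \<mu>\<close> _ _ abs_f, of "{..<2}" i] by auto
  have sum_int: "integrable ?P (\<lambda>z. \<bar>f (z 0) + f (z 1)\<bar>)"
    using comp_f[of 0] comp_f[of 1] by simp
  \<comment> \<open>the defect in the triangle inequality: nonnegative, and positive where the signs differ\<close>
  define g where "g z = \<bar>f (z 0)\<bar> + \<bar>f (z 1)\<bar> - \<bar>f (z 0) + f (z 1)\<bar>" for z :: "nat \<Rightarrow> 'a"
  have g_nonneg: "0 \<le> g z" for z
    unfolding g_def by (simp add: abs_triangle_ineq)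
  have g_int: "integrable ?P g"
    unfolding g_def using comp_int[of 0] comp_int[of 1] sum_int by simp
  have "(\<integral>z. g z \<partial>?P) = 2 * (\<integral>x. \<bar>f x\<bar> \<partial>\<mu>) - (\<integral>z. \<bar>f (z 0) + f (z 1)\<bar> \<partial>?P)"
    unfolding g_def using comp_int[of 0] comp_int[of 1] sum_int by simp
  with le have "(\<integral>z. g z \<partial>?P) = 0"
    using Bochner_Integration.integral_nonneg[of ?P g] g_nonneg by simp
  then have AE: "AE z in ?P. g z = 0"
    using integral_nonneg_eq_0_iff_AE[OF g_int] g_nonneg by simp
  have [measurable]: "g \<in> borel_measurable ?P"
    using g_int by (rule borel_measurable_integrable)
  have pred: "Measurable.pred ?P (\<lambda>z. g z = 0)"
    by measurable
  have pos: "{x \<in> space \<mu>. 0 < f x} \<in> sets \<mu>" and neg: "{x \<in> space \<mu>. f x < 0} \<in> sets \<mu>"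
    by measurable
  have "g z \<noteq> 0" if "z 0 \<in> {x \<in> space \<mu>. 0 < f x}" "z 1 \<in> {x \<in> space \<mu>. f x < 0}" for z
    using that by (simp add: g_def abs_if)
  then show ?thesis
    by (rule emeasure_mult_eq_0_of_AE_PiM2[OF \<open>prob_space \<mu>\<close> pos neg AE pred])
qed

lemma AE_zero_of_mean_zero_sign_null:
  fixes f :: "'a \<Rightarrow> real"
  assumes "prob_space \<mu>" and [measurable]: "f \<in> borel_measurable \<mu>"
    and int: "integrable \<mu> f" and mean: "(\<integral>x. f x \<partial>\<mu>) = 0"
    and null: "emeasure \<mu> {x \<in> space \<mu>. 0 < f x} * emeasure \<mu> {x \<in> space \<mu>. f x < 0} = 0"
  shows "AE x in \<mu>. f x = 0"
proof -
  have "AE x in \<mu>. 0 \<le> - f x" if "emeasure \<mu> {x \<in> space \<mu>. 0 < f x} = 0"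
    using that by (subst AE_iff_measurable[OF _ refl]) (auto simp: not_le)
  moreover have "AE x in \<mu>. 0 \<le> f x" if "emeasure \<mu> {x \<in> space \<mu>. f x < 0} = 0"
    using that by (subst AE_iff_measurable[OF _ refl]) (auto simp: not_le)
  ultimately show ?thesis
    using null int mean integral_nonneg_eq_0_iff_AE[of \<mu> f] integral_nonneg_eq_0_iff_AE[of \<mu> "\<lambda>x. - f x"]
    by auto
qed

lemma stoch_le_integral_pos_part:
  assumes \<alpha>: "real_distribution \<alpha>" and \<beta>: "real_distribution \<beta>" and le: "stoch_le \<alpha> \<beta>"
    and "integrable \<alpha> (\<lambda>x. x)" "integrable \<beta> (\<lambda>x. x)"
  shows "(\<integral>x. max 0 (x - m) \<partial>\<alpha>) \<le> (\<integral>x. max 0 (x - m) \<partial>\<beta>)"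
proof -
  have "(\<integral>\<^sup>+x. ennreal (max 0 (x - m)) \<partial>M) = ennreal (\<integral>x. max 0 (x - m) \<partial>M)"
    if "real_distribution M" "integrable M (\<lambda>x. x)" for M
  proof -
    interpret real_distribution M by fact
    show ?thesis
      using that(2) by (intro nn_integral_eq_integral) auto
  qed
  then have "ennreal (\<integral>x. max 0 (x - m) \<partial>\<alpha>) \<le> ennreal (\<integral>x. max 0 (x - m) \<partial>\<beta>)"
    using stoch_le_nn_integral_pos_part[OF \<alpha> \<beta> le, of m] \<alpha> \<beta> assms(4,5) by simp
  then show ?thesis
    by (simp add: ennreal_le_iff Bochner_Integration.integral_nonneg)
qed

lemma D_minus_stoch_le_midpoint:
  assumes "D_minus \<mu>"
  shows "stoch_le \<mu> (distr (PiM {..<2::nat} (\<lambda>_. \<mu>)) borel (\<lambda>z. (z 0 + z 1) / 2))"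
proof -
  have "prob_weights 2 (\<lambda>_. 1/2)"
    by (simp add: prob_weights_def)
  with assms have "stoch_le \<mu> (weighted_sum_law \<mu> 2 (\<lambda>_. 1/2))"
    by (simp add: D_minus_iff)
  also have "weighted_sum_law \<mu> 2 (\<lambda>_. 1/2) = distr (PiM {..<2::nat} (\<lambda>_. \<mu>)) borel (\<lambda>z. (z 0 + z 1) / 2)"
    unfolding weighted_sum_law_def
    by (intro distr_cong) (simp_all add: numeral_2_eq_2 lessThan_Suc field_simps)
  finally show ?thesis .
qed

lemma D_minus_abs_deviation_le_midpoint:
  assumes D: "D_minus \<mu>" and int: "integrable \<mu> (\<lambda>x. x)"
  defines "m \<equiv> \<integral>x. x \<partial>\<mu>"
  shows "2 * (\<integral>x. \<bar>x - m\<bar> \<partial>\<mu>) \<le> (\<integral>z. \<bar>(z 0 - m) + (z 1 - m)\<bar> \<partial>PiM {..<2::nat} (\<lambda>_. \<mu>))"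
proof -
  interpret \<mu>: real_distribution \<mu>
    using D by (rule D_minus_real_distribution)
  let ?P = "PiM {..<2::nat} (\<lambda>_. \<mu>)"
  interpret P: prob_space ?P by (intro prob_space_PiM) (simp add: \<mu>.prob_space_axioms)
  define S where "S z = (z 0 + z 1) / 2" for z :: "nat \<Rightarrow> real"
  have comp [measurable]: "(\<lambda>z. z i) \<in> borel_measurable ?P" if "i < 2" for i
    using measurable_component_singleton[of i "{..<2}" "\<lambda>_. \<mu>"] that
    by (simp add: measurable_cong_sets[OF refl \<mu>.events_eq_borel])
  have S [measurable]: "S \<in> borel_measurable ?P"
    unfolding S_def by measurable
  have ident: "(\<lambda>x. x) \<in> borel_measurable \<mu>"
    by (simp add: measurable_ident_sets)
  have comp_int: "integrable ?P (\<lambda>z. z i)" "(\<integral>z. z i \<partial>?P) = m" if "i < 2" for i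
    using that int integrable_PiM_component[OF \<mu>.prob_space_axioms _ _ ident, of "{..<2}" i]
      integral_PiM_component[OF \<mu>.prob_space_axioms _ _ ident, of "{..<2}" i]
    by (simp_all add: m_def)
  have S_int: "integrable ?P S" and S_mean: "(\<integral>z. S z \<partial>?P) = m"
    unfolding S_def using comp_int[of 0] comp_int[of 1] by simp_all
  have S_law: "real_distribution (distr ?P borel S)"
    by (rule P.real_distribution_distr[OF S])
  have S_law_int: "integrable (distr ?P borel S) (\<lambda>x. x)"
    using S_int by (subst integrable_distr_eq[OF S measurable_ident_sets[OF refl]])
  have "(\<integral>x. max 0 (x - m) \<partial>\<mu>) \<le> (\<integral>x. max 0 (x - m) \<partial>distr ?P borel S)"
    using D_minus_stoch_le_midpoint[OF D] unfolding S_def[symmetric]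
    by (rule stoch_le_integral_pos_part[OF \<mu>.real_distribution_axioms S_law _ int S_law_int])
  also have "\<dots> = (\<integral>z. max 0 (S z - m) \<partial>?P)"
    by (rule integral_distr[OF S]) simp
  finally have "(\<integral>x. \<bar>x - m\<bar> \<partial>\<mu>) \<le> (\<integral>z. \<bar>S z - m\<bar> \<partial>?P)"
    using integral_pos_part_centered[OF \<mu>.prob_space_axioms int]
      integral_pos_part_centered[OF P.prob_space_axioms S_int]
    unfolding S_mean m_def by simp
  also have "\<dots> = (\<integral>z. \<bar>(z 0 - m) + (z 1 - m)\<bar> / 2 \<partial>?P)"
  proof (rule Bochner_Integration.integral_cong[OF refl])
    fix z
    have "S z - m = ((z 0 - m) + (z 1 - m)) / 2"
      by (simp add: S_def field_simps)
    then show "\<bar>S z - m\<bar> = \<bar>(z 0 - m) + (z 1 - m)\<bar> / 2"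
      by (simp only: abs_divide abs_numeral)
  qed
  finally show ?thesis
    by simp
qed

lemma D_minus_integrable_imp_AE_eq_mean:
  assumes D: "D_minus \<mu>" and int: "integrable \<mu> (\<lambda>x. x)"
  shows "AE x in \<mu>. x = (\<integral>x. x \<partial>\<mu>)"
proof -
  interpret \<mu>: real_distribution \<mu>
    using D by (rule D_minus_real_distribution)
  define m where "m = (\<integral>x. x \<partial>\<mu>)"
  have f_meas: "(\<lambda>x. x - m) \<in> borel_measurable \<mu>"
    by (simp add: measurable_ident_sets)
  have f_int: "integrable \<mu> (\<lambda>x. x - m)"
    by (intro Bochner_Integration.integrable_diff int \<mu>.integrable_const)
  have f_mean: "(\<integral>x. x - m \<partial>\<mu>) = 0"
    using Bochner_Integration.integral_diff[OF int \<mu>.integrable_const, of m]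
    by (simp add: m_def \<mu>.prob_space[unfolded \<mu>.space_eq_univ])
  have "emeasure \<mu> {x \<in> space \<mu>. 0 < x - m} * emeasure \<mu> {x \<in> space \<mu>. x - m < 0} = 0"
    using D_minus_abs_deviation_le_midpoint[OF D int] unfolding m_def[symmetric]
    by (rule emeasure_pos_neg_zero_of_abs_add[OF \<mu>.prob_space_axioms f_meas f_int])
  from AE_zero_of_mean_zero_sign_null[OF \<mu>.prob_space_axioms f_meas f_int f_mean this]
  show ?thesis
    by (simp add: m_def)
qed

lemma D_minus_rv_nondegenerate_imp_infinite_mean:
  assumes "prob_space M" and [measurable]: "X \<in> borel_measurable M" and "D_minus_rv M X"
    and nondeg: "\<not> (\<exists>c. AE \<omega> in M. X \<omega> = c)"
  shows "(\<integral>\<^sup>+\<omega>. ennreal \<bar>X \<omega>\<bar> \<partial>M) = \<infinity>"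
proof (rule ccontr)
  assume "(\<integral>\<^sup>+\<omega>. ennreal \<bar>X \<omega>\<bar> \<partial>M) \<noteq> \<infinity>"
  then have "integrable (distr M borel X) (\<lambda>x. x)"
    by (intro integrableI_bounded) (simp_all add: nn_integral_distr top.not_eq_extremum)
  then have "AE x in distr M borel X. x = (\<integral>x. x \<partial>distr M borel X)"
    using \<open>D_minus_rv M X\<close> by (intro D_minus_integrable_imp_AE_eq_mean) (simp add: D_minus_rv_def)
  then have "AE \<omega> in M. X \<omega> = (\<integral>x. x \<partial>distr M borel X)"
    by (simp add: AE_distr_iff)
  with nondeg show False by blast
qed

theorem theorem2:
  fixes M :: "'a measure"
  assumes "prob_space M"
  shows
   "(\<forall>(\<mu>s :: nat \<Rightarrow> real measure) (\<mu> :: real measure).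
       (\<forall>n. D_minus (\<mu>s n)) \<and> real_distribution \<mu> \<and> weak_conv_m \<mu>s \<mu> \<longrightarrow> D_minus \<mu>)
  \<and> (\<forall>X. X \<in> borel_measurable M \<and> D_minus_rv M X \<and> \<not> (\<exists>c. AE \<omega> in M. X \<omega> = c)
        \<longrightarrow> (\<integral>\<^sup>+ \<omega>. ennreal \<bar>X \<omega>\<bar> \<partial>M) = \<infinity>)
  \<and> (\<forall>X (a::real) (b::real). X \<in> borel_measurable M \<and> D_minus_rv M X \<and> 0 < a
        \<longrightarrow> D_minus_rv M (\<lambda>\<omega>. a * X \<omega> + b))
  \<and> (\<forall>X Y. X \<in> borel_measurable M \<and> Y \<in> borel_measurable M \<and> D_minus_rv M X \<and> D_minus_rv M Y
        \<and> prob_space.indep_var M borel X borel Y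
        \<longrightarrow> D_minus_rv M (\<lambda>\<omega>. X \<omega> + Y \<omega>))
  \<and> (\<forall>X Y. X \<in> borel_measurable M \<and> Y \<in> borel_measurable M \<and> D_minus_rv M X \<and> D_minus_rv M Y
        \<and> prob_space.indep_var M borel X borel Y
        \<longrightarrow> D_minus_rv M (\<lambda>\<omega>. max (X \<omega>) (Y \<omega>)))
  \<and> (\<forall>X (\<phi>::real \<Rightarrow> real). X \<in> borel_measurable M \<and> D_minus_rv M X \<and> mono \<phi> \<and> convex_on UNIV \<phi>
        \<longrightarrow> D_minus_rv M (\<lambda>\<omega>. \<phi> (X \<omega>)))"
proof -
  have add_convex: "convex_on UNIV (\<lambda>p::real \<times> real. fst p + snd p)"
    by (simp add: convex_on_def algebra_simps)
  have max_convex: "convex_on UNIV (\<lambda>p::real \<times> real. max (fst p) (snd p))"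
    by (auto simp: convex_on_def intro!: max.boundedI add_mono mult_left_mono)
  have add_mono': "fst (x, y) + snd (x, y) \<le> fst (x', y') + snd (x', y')"
    and max_mono: "max (fst (x, y)) (snd (x, y)) \<le> max (fst (x', y')) (snd (x', y'))"
    if "x \<le> x'" "y \<le> y'" for x y x' y' :: real
    using that by (auto simp: max_def)
  have add: "D_minus_rv M (\<lambda>\<omega>. X \<omega> + Y \<omega>)"
    and max: "D_minus_rv M (\<lambda>\<omega>. max (X \<omega>) (Y \<omega>))"
    if "X \<in> borel_measurable M" "Y \<in> borel_measurable M" "D_minus_rv M X" "D_minus_rv M Y"
      "prob_space.indep_var M borel X borel Y" for X Y
    using D_minus_rv_indep_convex_mono[OF assms that add_convex add_mono']
      D_minus_rv_indep_convex_mono[OF assms that max_convex max_mono]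
    by simp_all
  show ?thesis
    using D_minus_weak_conv_limit D_minus_rv_nondegenerate_imp_infinite_mean[OF assms]
      D_minus_rv_affine add max D_minus_rv_convex_mono
    by blast
qed

end
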